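(* Let $n,m\in\mathbb Z$, $k\ge0$, and $a,b,q,p\in\mathbb C$ with $|p|<1$. Then \[ \binom{n+m}{k}_{a,b;q,p}=\sum_{j=0}^k\binom nj_{a,b;q,p}\binom{m}{k-j}_{aq^{2n-j},bq^{n+j};q,p}\prod_{i=1}^{k-j}W_{a,b;q,p}(i+j,n-j). \]
   Context: $\theta(x;p)=\prod_{j\ge0}(1-p^jx)(1-p^{j+1}/x)$, $\theta(x_1,\dots,x_\ell;p)=\prod_i\theta(x_i;p)$; parameters are such that denominators below do not vanish. Product convention: $\prod_{j=l}^mA_j=A_l\cdots A_m$ if $m>l-1$, $1$ if $m=l-1$, $A_{l-1}^{-1}\cdots A_{m+1}^{-1}$ if $m<l-1$. For parameters $(a,b)$: $w_{a,b;q,p}(s,t)=\frac{\theta(aq^{s+2t},bq^{2s+t-2},aq^{t-s-1}/b;p)}{\theta(aq^{s+2t-2},bq^{2s+t},aq^{t-s+1}/b;p)}q$, $W_{a,b;q,p}(s,t)=\prod_{j=1}^tw_{a,b;q,p}(s,j)=\frac{\theta(aq^{s+2t},bq^{2s},bq^{2s-1},aq^{1-s}/b,aq^{-s}/b;p)}{\theta(aq^s,bq^{2s+t},bq^{2s+t-1},aq^{1+t-s}/b,aq^{t-s}/b;p)}q^t$, and $\binom nk_{a,b;q,p}$ ($n,k\in\mathbb Z$) is the unique family with $\binom n0_{a,b;q,p}=\binom nn_{a,b;q,p}=1$ and $\binom{n+1}k_{a,b;q,p}=\binom nk_{a,b;q,p}+\binom n{k-1}_{a,b;q,p}W_{a,b;q,p}(k,n+1-k)$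 for $(n+1,k)\ne(0,0)$ (closed form $\frac{(q^{1+k},aq^{1+k},bq^{1+k},aq^{1-k}/b;q,p)_{n-k}}{(q,aq,bq^{1+2k},aq/b;q,p)_{n-k}}$ with $(x;q,p)_r=\prod_{i=0}^{r-1}\theta(xq^i;p)$). The coefficient $\binom{\cdot}{\cdot}_{aq^{2n-j},bq^{n+j};q,p}$ is this with $(a,b)$ replaced by $(aq^{2n-j},bq^{n+j})$. *)

theory Defs
  imports "HOL-Analysis.Analysis"
begin

definition etheta :: "complex \<Rightarrow> complex \<Rightarrow> complex" where
  "etheta x p = (\<Prod>j. (1 - p ^ j * x) * (1 - p ^ (j + 1) / x))"

definition prodZ :: "int \<Rightarrow> int \<Rightarrow> (int \<Rightarrow> complex) \<Rightarrow> complex" where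
  "prodZ l m A = (if m \<ge> l - 1 then (\<Prod>j\<in>{l..m}. A j)
                  else (\<Prod>j\<in>{m+1..l-1}. inverse (A j)))"

definition wgt :: "complex \<Rightarrow> complex \<Rightarrow> complex \<Rightarrow> complex \<Rightarrow> int \<Rightarrow> int \<Rightarrow> complex" where
  "wgt a b q p s t =
     (etheta (a * q powi (s + 2 * t)) p * etheta (b * q powi (2 * s + t - 2)) p
        * etheta (a * q powi (t - s - 1) / b) p)
   / (etheta (a * q powi (s + 2 * t - 2)) p * etheta (b * q powi (2 * s + t)) p
        * etheta (a * q powi (t - s + 1) / b) p) * q"

definition Wgt :: "complex \<Rightarrow> complex \<Rightarrow> complex \<Rightarrow> complex \<Rightarrow> int \<Rightarrow> int \<Rightarrow> complex" where
  "Wgt a b q p s t = prodZ 1 t (\<lambda>j. wgt a b q p s j)"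

definition ebinom :: "complex \<Rightarrow> complex \<Rightarrow> complex \<Rightarrow> complex \<Rightarrow> int \<Rightarrow> int \<Rightarrow> complex" where
  "ebinom a b q p = (THE f :: int \<Rightarrow> int \<Rightarrow> complex.
      (\<forall>n. f n 0 = 1) \<and> (\<forall>n. f n n = 1) \<and>
      (\<forall>n k. (n + 1, k) \<noteq> (0, 0) \<longrightarrow>
         f (n + 1) k = f n k + f n (k - 1) * Wgt a b q p k (n + 1 - k)))"

end

theory Submission
  imports Defs
begin

text \<open>
  Replacing \<open>(a,b)\<close> by
  \<open>(a q^(2n-j), b q^(n+j))\<close> shifts the small weights, \<open>w(s,t) \<mapsto> w(s+j, t+n-j)\<close>, so the
  shifted weights \<open>W'\<close> satisfy the cocycle relation \<open>W(s+j, n-j) W'(s,t) = W(s+j, n-j+t)\<close>.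
  Using only this relation, for fixed \<open>n\<close> and \<open>k\<close> the right-hand side obeys the same recursion
  in \<open>m\<close> as the coefficient at \<open>(n+m, k)\<close>, and the two agree at \<open>m = 0\<close> because the coefficient
  at \<open>(0, r)\<close> vanishes for \<open>r > 0\<close>.  Induction on \<open>k\<close>, with a two-sided induction on \<open>m\<close>
  inside, finishes the proof.
\<close>

section \<open>Integer ranges and recurrences\<close>

lemma prodZ_empty: "prodZ l (l - 1) f = 1"
  by (simp add: prodZ_def)

lemma prodZ_add_one:
  assumes "f (m + 1) \<noteq> 0"
  shows "prodZ l (m + 1) f = prodZ l m f * f (m + 1)"
proof -
  consider "m \<ge> l - 1" | "m = l - 2" | "m < l - 2" by linarith
  then show ?thesis
  proof cases
    case 1
    then have "{l..m + 1} = insert (m + 1) {l..m}" by auto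
    with 1 show ?thesis by (simp add: prodZ_def mult.commute)
  next
    case 2
    with assms show ?thesis by (simp add: prodZ_def)
  next
    case 3
    then have "{m + 1..l - 1} = insert (m + 1) {m + 2..l - 1}" by auto
    with 3 assms show ?thesis by (simp add: prodZ_def add.commute)
  qed
qed

lemma prodZ_nonzero: "(\<And>j. f j \<noteq> 0) \<Longrightarrow> prodZ l m f \<noteq> 0"
  by (simp add: prodZ_def)

lemma prodZ_append:
  assumes "\<And>j. f j \<noteq> 0"
  shows "prodZ 1 u f * prodZ 1 t (\<lambda>l. f (l + u)) = prodZ 1 (u + t) f"
proof (induction t rule: int_induct[of _ 0])
  case base
  show ?case using prodZ_empty[of 1] by simp
next
  case (step1 i)
  then show ?case
    using prodZ_add_one[of "\<lambda>l. f (l + u)" i 1] prodZ_add_one[of f "u + i" 1] assms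
    by (simp add: algebra_simps)
next
  case (step2 i)
  then show ?case
    using prodZ_add_one[of "\<lambda>l. f (l + u)" "i - 1" 1] prodZ_add_one[of f "u + i - 1" 1] assms
    by (simp add: algebra_simps)
qed

definition sumZ :: "int \<Rightarrow> int \<Rightarrow> (int \<Rightarrow> 'a::ab_group_add) \<Rightarrow> 'a" where
  "sumZ l m A = (if m \<ge> l - 1 then (\<Sum>j\<in>{l..m}. A j) else - (\<Sum>j\<in>{m + 1..l - 1}. A j))"

lemma sumZ_empty: "sumZ l (l - 1) A = 0"
  by (simp add: sumZ_def)

lemma sumZ_add_one: "sumZ l (m + 1) A = sumZ l m A + A (m + 1)"
proof -
  consider "m \<ge> l - 1" | "m = l - 2" | "m < l - 2" by linarith
  then show ?thesis
  proof cases
    case 1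
    then have "{l..m + 1} = insert (m + 1) {l..m}" by auto
    with 1 show ?thesis by (simp add: sumZ_def)
  next
    case 2
    then show ?thesis by (simp add: sumZ_def)
  next
    case 3
    then have "{m + 1..l - 1} = insert (m + 1) {m + 2..l - 1}" by auto
    with 3 show ?thesis by (simp add: sumZ_def add.commute)
  qed
qed

lemma int_recurrence_unique:
  fixes d e c :: "int \<Rightarrow> 'a::ab_group_add"
  assumes "\<And>i. d (i + 1) = d i + c i" and "\<And>i. e (i + 1) = e i + c i" and "d i\<^sub>0 = e i\<^sub>0"
  shows "d i = e i"
proof (induction i rule: int_induct[of _ i\<^sub>0])
  case base
  show ?case by (fact assms(3))
next
  case (step1 i)
  then show ?case using assms(1,2)[of i] by simp
next
  case (step2 i)
  then show ?case using assms(1,2)[of "i - 1"] by simp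
qed

lemma int_cases_succ_pred:
  fixes n :: int
  obtains "n = 0" | c where "n = int c + 1" | c where "n = - int c - 1"
proof (cases n rule: int_cases3)
  case (pos k)
  then show ?thesis using that(2)[of "k - 1"] by simp
next
  case (neg k)
  then show ?thesis using that(3)[of "k - 1"] by simp
qed (use that in simp)

section \<open>Solutions of the binomial recursion\<close>

definition binom_family :: "(int \<Rightarrow> int \<Rightarrow> 'a::field) \<Rightarrow> (int \<Rightarrow> int \<Rightarrow> 'a) \<Rightarrow> bool" where
  "binom_family W f \<longleftrightarrow> (\<forall>n. f n 0 = 1) \<and> (\<forall>n. f n n = 1) \<and>
      (\<forall>n k. (n + 1, k) \<noteq> (0, 0) \<longrightarrow> f (n + 1) k = f n k + f n (k - 1) * W k (n + 1 - k))"

lemma binom_family_col0: "binom_family W f \<Longrightarrow> f n 0 = 1"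
  unfolding binom_family_def by blast

lemma binom_family_diag: "binom_family W f \<Longrightarrow> f n n = 1"
  unfolding binom_family_def by blast

lemma binom_family_rec:
  "binom_family W f \<Longrightarrow> (n + 1, k) \<noteq> (0, 0) \<Longrightarrow>
     f (n + 1) k = f n k + f n (k - 1) * W k (n + 1 - k)"
  unfolding binom_family_def by blast

lemma binom_family_unique:
  assumes W: "\<And>s t. W s t \<noteq> 0" and f: "binom_family W f" and g: "binom_family W g"
  shows "f = g"
proof -
  have nonneg: "f n (int c) = g n (int c)" for n c
  proof (induction c arbitrary: n)
    case 0
    show ?case using f g by (simp add: binom_family_col0)
  next
    case (Suc c)
    have "f n (int c + 1) = g n (int c + 1)"
    proof (rule int_recurrence_unique[where d = "\<lambda>i. f i (int c + 1)" and e = "\<lambda>i. g i (int c + 1)"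
          and c = "\<lambda>i. g i (int c) * W (int c + 1) (i - int c)"])
      show "f (i + 1) (int c + 1) = f i (int c + 1) + g i (int c) * W (int c + 1) (i - int c)"
        and "g (i + 1) (int c + 1) = g i (int c + 1) + g i (int c) * W (int c + 1) (i - int c)" for i
        using binom_family_rec[OF f, of i "int c + 1"] binom_family_rec[OF g, of i "int c + 1"] Suc
        by simp_all
      show "f (int c + 1) (int c + 1) = g (int c + 1) (int c + 1)"
        using f g by (simp add: binom_family_diag)
    qed
    then show ?case by (simp add: add.commute)
  qed
  have neg: "f n (- int c) = g n (- int c)" for n c
  proof (induction c arbitrary: n)
    case 0
    show ?case using f g by (simp add: binom_family_col0)
  next
    case (Suc c)
    have "- int (Suc c) = - int c - 1" by simp
    moreover have "f n (- int c - 1) = g n (- int c - 1)"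
    proof (cases "n = - int c - 1")
      case True
      then show ?thesis using binom_family_diag[OF f] binom_family_diag[OF g] by simp
    next
      case False
      then have "(n + 1, - int c) \<noteq> (0, 0)" by simp
      from binom_family_rec[OF f this] binom_family_rec[OF g this] Suc W[of "- int c" "n + 1 + int c"]
      show ?thesis by auto
    qed
    ultimately show ?case by metis
  qed
  show ?thesis
  proof (intro ext)
    fix n k
    show "f n k = g n k"
      using nonneg[of n "nat k"] neg[of n "nat (- k)"] by (cases "k \<ge> 0") simp_all
  qed
qed

text \<open>
  Explicit solution, column by column: column \<open>k + 1\<close> is the signed sum of its increments, and
  column \<open>-1\<close> is the indicator of \<open>n = -1\<close> (the recursion is not imposed at \<open>(0,0)\<close>), from
  which the recursion, solved for \<open>f n (k - 1)\<close>, determines the columns further left.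
\<close>

primrec binom_col_pos :: "(int \<Rightarrow> int \<Rightarrow> 'a::field) \<Rightarrow> nat \<Rightarrow> int \<Rightarrow> 'a" where
  "binom_col_pos W 0 n = 1"
| "binom_col_pos W (Suc k) n =
     1 + sumZ (int k + 1) (n - 1) (\<lambda>i. binom_col_pos W k i * W (int k + 1) (i - int k))"

primrec binom_col_neg :: "(int \<Rightarrow> int \<Rightarrow> 'a::field) \<Rightarrow> nat \<Rightarrow> int \<Rightarrow> 'a" where
  "binom_col_neg W 0 n = (if n = -1 then 1 else 0)"
| "binom_col_neg W (Suc k) n =
     (binom_col_neg W k (n + 1) - binom_col_neg W k n) / W (- int k - 1) (n + int k + 2)"

definition binom_table :: "(int \<Rightarrow> int \<Rightarrow> 'a::field) \<Rightarrow> int \<Rightarrow> int \<Rightarrow> 'a" where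
  "binom_table W n k = (if k \<ge> 0 then binom_col_pos W (nat k) n else binom_col_neg W (nat (- k - 1)) n)"

lemma binom_col_pos_add_one:
  "binom_col_pos W (Suc k) (n + 1) = binom_col_pos W (Suc k) n + binom_col_pos W k n * W (int k + 1) (n - int k)"
  using sumZ_add_one[of "int k + 1" "n - 1" "\<lambda>i. binom_col_pos W k i * W (int k + 1) (i - int k)"]
  by simp

lemma binom_col_pos_diag: "binom_col_pos W (Suc k) (int k + 1) = 1"
  using sumZ_empty[of "int k + 1"] by simp

lemma binom_col_neg_below: "n < - int k - 1 \<Longrightarrow> binom_col_neg W k n = 0"
  by (induction k arbitrary: n) simp_all

lemma binom_col_neg_diag:
  assumes "\<And>s. W s 0 = 1"
  shows "binom_col_neg W k (- int k - 1) = 1"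
proof (induction k)
  case 0
  show ?case by simp
next
  case (Suc k)
  have "- int (Suc k) - 1 + 1 = - int k - 1" and "- int (Suc k) - 1 + int k + 2 = 0" by simp_all
  with Suc assms binom_col_neg_below[of "- int (Suc k) - 1" k W] show ?case
    by (simp only: binom_col_neg.simps) simp
qed

lemma binom_table_nonneg: "binom_table W n (int k) = binom_col_pos W k n"
  by (simp add: binom_table_def)

lemma binom_table_succ: "binom_table W n (int k + 1) = binom_col_pos W (Suc k) n"
  by (simp add: binom_table_def nat_add_distrib)

lemma binom_table_neg: "binom_table W n (- int k - 1) = binom_col_neg W k n"
  by (simp add: binom_table_def)

lemma binom_table_neg_pred: "binom_table W n (- int k - 2) = binom_col_neg W (Suc k) n"
  using binom_table_neg[of W n "Suc k"] by (simp add: algebra_simps)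

lemma binom_table_diag:
  assumes "\<And>s. W s 0 = 1"
  shows "binom_table W n n = 1"
proof (cases n rule: int_cases_succ_pred)
  case 1
  then show ?thesis by (simp add: binom_table_def)
next
  case (2 c)
  then show ?thesis by (simp only: binom_table_succ binom_col_pos_diag)
next
  case (3 c)
  then show ?thesis using binom_col_neg_diag[of W, OF assms] by (simp only: binom_table_neg)
qed

lemma binom_table_rec:
  assumes "\<And>s t. W s t \<noteq> 0" and "(n + 1, k) \<noteq> (0, 0)"
  shows "binom_table W (n + 1) k = binom_table W n k + binom_table W n (k - 1) * W k (n + 1 - k)"
proof (cases k rule: int_cases_succ_pred)
  case 1
  with assms(2) show ?thesis by (simp add: binom_table_def)
next
  case (2 c)
  then show ?thesis
    by (simp add: binom_table_succ binom_table_nonneg binom_col_pos_add_one del: binom_col_pos.simps)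
next
  case (3 c)
  have "k - 1 = - int c - 2" and "n + 1 - k = n + int c + 2" using 3 by simp_all
  then have "binom_table W n (k - 1) * W k (n + 1 - k) = binom_col_neg W c (n + 1) - binom_col_neg W c n"
    using 3 assms(1)[of k "n + int c + 2"] by (simp only: binom_table_neg_pred binom_col_neg.simps) simp
  moreover have "binom_table W m k = binom_col_neg W c m" for m
    using 3 by (simp only: binom_table_neg)
  ultimately show ?thesis by simp
qed

lemma binom_family_binom_table:
  assumes "\<And>s. W s 0 = 1" and "\<And>s t. W s t \<noteq> 0"
  shows "binom_family W (binom_table W)"
  unfolding binom_family_def
  using binom_table_diag[of W, OF assms(1)] binom_table_rec[of W, OF assms(2)]
  by (simp add: binom_table_def)

lemma binom_family_The:
  assumes "\<And>s. W s 0 = 1" and "\<And>s t. W s t \<noteq> 0"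
  shows "binom_family W (THE f. binom_family W f)"
proof (rule theI[of "binom_family W" "binom_table W"])
  show "binom_family W (binom_table W)" using assms by (rule binom_family_binom_table)
  show "f = binom_table W" if "binom_family W f" for f
    using binom_family_unique[OF assms(2) that] binom_family_binom_table[of W, OF assms] .
qed

lemma binom_family_zero_above:
  assumes f: "binom_family W f" and W0: "\<And>s. W s 0 = 1"
  shows "0 \<le> n \<Longrightarrow> n < int k \<Longrightarrow> f n (int k) = 0"
proof (induction k arbitrary: n)
  case 0
  then show ?case by simp
next
  case (Suc k)
  have "0 \<le> n \<longrightarrow> f n (int k + 1) = 0" if "n \<le> int k" for n
    using that
  proof (induction n rule: int_le_induct)
    case base
    show ?case using binom_family_rec[OF f, of "int k" "int k + 1"] binom_family_diag[OF f] W0 by simp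
  next
    case (step i)
    show ?case
    proof
      assume "0 \<le> i - 1"
      with step Suc.IH[of "i - 1"] have "f i (int k + 1) = 0" and "f (i - 1) (int k) = 0" by simp_all
      with binom_family_rec[OF f, of "i - 1" "int k + 1"] show "f (i - 1) (int k + 1) = 0" by simp
    qed
  qed
  with Suc.prems have "f n (int k + 1) = 0" by simp
  then show ?case by (simp add: add.commute)
qed

section \<open>Convolution under a cocycle condition\<close>

locale binom_convolution =
  fixes W :: "int \<Rightarrow> int \<Rightarrow> 'a::field" and f :: "int \<Rightarrow> int \<Rightarrow> 'a"
    and V :: "nat \<Rightarrow> int \<Rightarrow> int \<Rightarrow> 'a" and g :: "nat \<Rightarrow> int \<Rightarrow> int \<Rightarrow> 'a"
    and n :: int
  assumes f_family: "binom_family W f"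
    and g_family: "binom_family (V j) (g j)"
    and V_zero: "V j s 0 = 1"
    and cocycle: "W (s + int j) (n - int j) * V j s t = W (s + int j) (n - int j + t)"
begin

definition cross_weight :: "nat \<Rightarrow> nat \<Rightarrow> 'a" where
  "cross_weight K j = (\<Prod>i=1..K-j. W (int i + int j) (n - int j))"

definition convolution :: "nat \<Rightarrow> int \<Rightarrow> 'a" where
  "convolution K m = (\<Sum>j=0..K. f n (int j) * g j m (int (K - j)) * cross_weight K j)"

lemma cross_weight_Suc:
  assumes "j \<le> K"
  shows "cross_weight (Suc K) j = cross_weight K j * W (int (Suc K)) (n - int j)"
proof -
  have "Suc K - j = Suc (K - j)" and "int (Suc (K - j)) + int j = int (Suc K)" using assms by auto
  then show ?thesis unfolding cross_weight_def by (simp add: prod.cl_ivl_Suc del: of_nat_Suc)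
qed

lemma convolution_term_add_one:
  assumes "j \<le> K"
  shows "g j (m + 1) (int (Suc K - j)) * cross_weight (Suc K) j
    = g j m (int (Suc K - j)) * cross_weight (Suc K) j
      + g j m (int (K - j)) * cross_weight K j * W (int (Suc K)) (n + m - int K)"
proof -
  define s where "s = int (Suc K - j)"
  have s: "s - 1 = int (K - j)" "s + int j = int (Suc K)" "n - int j + (m + 1 - s) = n + m - int K"
    using assms by (auto simp: s_def)
  have "(m + 1, s) \<noteq> (0, 0)" using assms by (simp add: s_def)
  then have "g j (m + 1) s * cross_weight (Suc K) j
      = (g j m s + g j m (s - 1) * V j s (m + 1 - s)) * (cross_weight K j * W (s + int j) (n - int j))"
    using binom_family_rec[OF g_family] cross_weight_Suc[OF assms] s(2) by simp
  also have "\<dots> = g j m s * cross_weight (Suc K) j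
      + g j m (int (K - j)) * cross_weight K j * (W (int (Suc K)) (n - int j) * V j s (m + 1 - s))"
    using cross_weight_Suc[OF assms] s(2) unfolding s(1) by (simp add: algebra_simps)
  also have "W (int (Suc K)) (n - int j) * V j s (m + 1 - s) = W (int (Suc K)) (n + m - int K)"
    using cocycle[of s j "m + 1 - s"] unfolding s(2,3) .
  finally show ?thesis unfolding s_def .
qed

lemma convolution_add_one:
  "convolution (Suc K) (m + 1) = convolution (Suc K) m + convolution K m * W (int (Suc K)) (n + m - int K)"
proof -
  have last_term: "convolution (Suc K) m'
      = (\<Sum>j=0..K. f n (int j) * (g j m' (int (Suc K - j)) * cross_weight (Suc K) j)) + f n (int (Suc K))"
    for m'
    using binom_family_col0[OF g_family] by (simp add: convolution_def cross_weight_def mult.assoc)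
  have "(\<Sum>j=0..K. f n (int j) * (g j (m + 1) (int (Suc K - j)) * cross_weight (Suc K) j))
      = (\<Sum>j=0..K. f n (int j) * (g j m (int (Suc K - j)) * cross_weight (Suc K) j)
          + f n (int j) * g j m (int (K - j)) * cross_weight K j * W (int (Suc K)) (n + m - int K))"
  proof (intro sum.cong refl)
    fix j assume "j \<in> {0..K}"
    then have "j \<le> K" by simp
    show "f n (int j) * (g j (m + 1) (int (Suc K - j)) * cross_weight (Suc K) j)
        = f n (int j) * (g j m (int (Suc K - j)) * cross_weight (Suc K) j)
          + f n (int j) * g j m (int (K - j)) * cross_weight K j * W (int (Suc K)) (n + m - int K)"
      unfolding convolution_term_add_one[OF \<open>j \<le> K\<close>] by (simp add: algebra_simps)
  qed
  then show ?thesis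
    unfolding last_term by (simp only: convolution_def sum.distrib sum_distrib_right add_ac)
qed

lemma convolution_zero: "convolution K 0 = f n (int K)"
proof -
  have "g j 0 (int (K - j)) = 0" if "j < K" for j
    using binom_family_zero_above[OF g_family V_zero, of 0 "K - j"] that by simp
  then have "convolution K 0 = (\<Sum>j=0..K. if j = K then f n (int K) else 0)"
    unfolding convolution_def cross_weight_def
    by (intro sum.cong) (auto simp: binom_family_col0[OF g_family])
  then show ?thesis by simp
qed

lemma eq_convolution: "f (n + m) (int K) = convolution K m"
proof (induction K arbitrary: m)
  case 0
  show ?case
    using binom_family_col0[OF f_family] binom_family_col0[OF g_family]
    by (simp add: convolution_def cross_weight_def)
next
  case (Suc K)
  show ?case
  proof (rule int_recurrence_unique[where d = "\<lambda>m. f (n + m) (int (Suc K))" and e = "convolution (Suc K)"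
        and c = "\<lambda>m. convolution K m * W (int (Suc K)) (n + m - int K)" and i\<^sub>0 = 0])
    show "f (n + (i + 1)) (int (Suc K))
        = f (n + i) (int (Suc K)) + convolution K i * W (int (Suc K)) (n + i - int K)" for i
      using binom_family_rec[OF f_family, of "n + i" "int (Suc K)"] Suc.IH by (simp add: algebra_simps)
    show "convolution (Suc K) (i + 1) = convolution (Suc K) i + convolution K i * W (int (Suc K)) (n + i - int K)"
      for i
      by (rule convolution_add_one)
    show "f (n + 0) (int (Suc K)) = convolution (Suc K) 0"
      by (simp add: convolution_zero)
  qed
qed

end

section \<open>The elliptic weights\<close>

lemma wgt_nonzero:
  assumes "q \<noteq> 0"
    and "\<And>r. etheta (a * q powi r) p \<noteq> 0"
    and "\<And>r. etheta (b * q powi r) p \<noteq> 0"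
    and "\<And>r. etheta (a * q powi r / b) p \<noteq> 0"
  shows "wgt a b q p s t \<noteq> 0"
  using assms by (simp add: wgt_def)

lemma Wgt_nonzero: "(\<And>s t. wgt a b q p s t \<noteq> 0) \<Longrightarrow> Wgt a b q p s t \<noteq> 0"
  unfolding Wgt_def by (rule prodZ_nonzero)

lemma Wgt_zero: "Wgt a b q p s 0 = 1"
  using prodZ_empty[of 1] by (simp add: Wgt_def)

lemma ebinom_eq_The: "ebinom a b q p = (THE f. binom_family (Wgt a b q p) f)"
  unfolding ebinom_def binom_family_def ..

lemma binom_family_ebinom:
  assumes "\<And>s t. wgt a b q p s t \<noteq> 0"
  shows "binom_family (Wgt a b q p) (ebinom a b q p)"
  unfolding ebinom_eq_The by (rule binom_family_The) (use Wgt_zero Wgt_nonzero assms in auto)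

lemma wgt_shift:
  assumes "q \<noteq> 0"
  shows "wgt (a * q powi (2 * n - j)) (b * q powi (n + j)) q p s t = wgt a b q p (s + j) (t + n - j)"
proof -
  have mul: "c * q powi x * q powi y = c * q powi (x + y)" for c x y
    using assms by (simp add: power_int_add mult.assoc)
  have quot: "c * q powi x / (d * q powi y) = c * q powi (x - y) / d" for c d x y
    using assms by (simp add: power_int_diff field_simps)
  show ?thesis
    unfolding wgt_def mul quot by (simp add: algebra_simps)
qed

lemma Wgt_shift_cocycle:
  assumes "q \<noteq> 0" and "\<And>s t. wgt a b q p s t \<noteq> 0"
  shows "Wgt a b q p (s + j) (n - j) * Wgt (a * q powi (2 * n - j)) (b * q powi (n + j)) q p s t
    = Wgt a b q p (s + j) (n - j + t)"
proof -
  have "(\<lambda>l. wgt a b q p (s + j) (l + n - j)) = (\<lambda>l. wgt a b q p (s + j) (l + (n - j)))"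
    by (simp add: algebra_simps)
  then show ?thesis
    unfolding Wgt_def wgt_shift[OF assms(1)] using prodZ_append assms(2) by metis
qed

theorem corollary4:
  fixes n m :: int and k :: nat and a b q p :: complex
  assumes "norm p < 1"
    and "a \<noteq> 0" and "b \<noteq> 0" and "q \<noteq> 0"
    and "\<And>r::int. etheta (a * q powi r) p \<noteq> 0"
    and "\<And>r::int. etheta (b * q powi r) p \<noteq> 0"
    and "\<And>r::int. etheta (a * q powi r / b) p \<noteq> 0"
    and "\<And>r::int. r \<noteq> 0 \<Longrightarrow> etheta (q powi r) p \<noteq> 0"
  shows "ebinom a b q p (n + m) (int k) =
    (\<Sum>j=0..k. ebinom a b q p n (int j)
       * ebinom (a * q powi (2 * n - int j)) (b * q powi (n + int j)) q p m (int (k - j))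
       * (\<Prod>i=1..k-j. Wgt a b q p (int i + int j) (n - int j)))"
proof -
  have wgt: "wgt a b q p s t \<noteq> 0" for s t
    using assms(4-7) by (rule wgt_nonzero)
  have wgt_shifted: "wgt (a * q powi (2 * n - int j)) (b * q powi (n + int j)) q p s t \<noteq> 0" for j :: nat and s t
    unfolding wgt_shift[OF assms(4)] by (rule wgt)
  interpret binom_convolution "Wgt a b q p" "ebinom a b q p"
    "\<lambda>j. Wgt (a * q powi (2 * n - int j)) (b * q powi (n + int j)) q p"
    "\<lambda>j. ebinom (a * q powi (2 * n - int j)) (b * q powi (n + int j)) q p" n
  proof
    show "binom_family (Wgt a b q p) (ebinom a b q p)"
      using wgt by (rule binom_family_ebinom)
    show "binom_family (Wgt (a * q powi (2 * n - int j)) (b * q powi (n + int j)) q p)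
        (ebinom (a * q powi (2 * n - int j)) (b * q powi (n + int j)) q p)" for j
      using wgt_shifted by (rule binom_family_ebinom)
    show "Wgt (a * q powi (2 * n - int j)) (b * q powi (n + int j)) q p s 0 = 1" for j s
      by (rule Wgt_zero)
    show "Wgt a b q p (s + int j) (n - int j) * Wgt (a * q powi (2 * n - int j)) (b * q powi (n + int j)) q p s t
        = Wgt a b q p (s + int j) (n - int j + t)" for j s t
      using assms(4) wgt by (rule Wgt_shift_cocycle)
  qed
  show ?thesis
    using eq_convolution[of m k] unfolding convolution_def cross_weight_def .
qed

end
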